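(* Let $D_\infty=\langle s,t\mid t^2,\ tsts\rangle$ with word metric $d(g_1,g_2)=|g_2g_1^{-1}|_S$ for $S=\{s^{\pm1},t\}$. Let $\alpha,\beta$ be minimal continuous actions of $D_\infty$ on an infinite compact Hausdorff space $X$, and suppose they are continuously orbit equivalent via a homeomorphism $\phi:X\to X$ and continuous cocycle $c:D_\infty\times X\to D_\infty$ with $\phi(\alpha_g x)=\beta_{c(g,x)}(\phi(x))$ for all $g,x$. Define $X_+=\{x\in X: \sup_{n\in\mathbb{Z}} d(c(s^n,x),s^n)<\infty\}$ and $X_-=\{x\in X: \sup_{n\in\mathbb{Z}} d(c(s^n,x),s^{-n})<\infty\}$. Then $X=X_+\sqcup X_-$ and both $X_+$ and $X_-$ are clopen in $X$.
   Context: Continuous orbit equivalence of two actions of $D_\infty$ on $X$: a homeomorphism $\phi:X\to X$ with inverse $\psi$ and continuous maps $a,b:D_\infty\times X\to D_\infty$ with $\phi(\alpha_g x)=\beta_{a(g,x)}\phi(x)$ and $\psi(\beta_h y)=\alpha_{b(h,y)}\psi(y)$; since the actions are topologically free, $a=c$ is a cocycle, i.e. $c(g_1g_2,x)=c(g_1,\alpha_{g_2}x)c(g_2,x)$. *)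

theory Defs
  imports "HOL-Analysis.Analysis"
begin

text \<open>The infinite dihedral group D_inf = <s,t | t^2, tsts>, realised concretely:
  DI n e stands for the normal form s^n t^e (e = True meaning one factor t).\<close>
datatype dinf = DI int bool

fun dmult :: "dinf \<Rightarrow> dinf \<Rightarrow> dinf" where
  "dmult (DI m a) (DI n b) = DI (m + (if a then - n else n)) (a \<noteq> b)"

fun dinv :: "dinf \<Rightarrow> dinf" where
  "dinv (DI m a) = (if a then DI m a else DI (- m) False)"

definition dunit :: dinf where "dunit = DI 0 False"
definition gen_s :: dinf where "gen_s = DI 1 False"
definition gen_t :: dinf where "gen_t = DI 0 True"

definition dzpow :: "dinf \<Rightarrow> int \<Rightarrow> dinf" where
  "dzpow g n = (if 0 \<le> n then (dmult g ^^ nat n) dunit else (dmult (dinv g) ^^ nat (- n)) dunit)"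

definition word_len :: "dinf \<Rightarrow> nat" where
  "word_len g = (LEAST k. \<exists>w. length w = k \<and> set w \<subseteq> {gen_s, dinv gen_s, gen_t}
                               \<and> foldr dmult w dunit = g)"

definition word_dist :: "dinf \<Rightarrow> dinf \<Rightarrow> nat" where
  "word_dist g1 g2 = word_len (dmult g2 (dinv g1))"

definition cont_action :: "(dinf \<Rightarrow> 'a::topological_space \<Rightarrow> 'a) \<Rightarrow> bool" where
  "cont_action \<alpha> \<longleftrightarrow> \<alpha> dunit = id \<and> (\<forall>g h. \<alpha> (dmult g h) = \<alpha> g \<circ> \<alpha> h)
      \<and> (\<forall>g. continuous_on UNIV (\<alpha> g))"

definition minimal_action :: "(dinf \<Rightarrow> 'a::topological_space \<Rightarrow> 'a) \<Rightarrow> bool" where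
  "minimal_action \<alpha> \<longleftrightarrow> (\<forall>x. closure (range (\<lambda>g. \<alpha> g x)) = UNIV)"

text \<open>Continuity of a map X \<rightarrow> D_inf (D_inf discrete) = local constancy.\<close>
definition cont_to_dinf :: "('a::topological_space \<Rightarrow> dinf) \<Rightarrow> bool" where
  "cont_to_dinf f \<longleftrightarrow> (\<forall>x. \<exists>U. open U \<and> x \<in> U \<and> (\<forall>y\<in>U. f y = f x))"

end

theory Submission
  imports Defs
begin

text \<open>At a point \<open>z\<close> that is free for \<open>\<alpha>\<close> and whose image is free for \<open>\<beta>\<close>, the map \<open>u \<mapsto> c(u, z)\<close> is
  a bijection of \<open>D\<^sub>\<infinity>\<close> with inverse \<open>h \<mapsto> b(h, \<phi> z)\<close>, and by the cocycle identities both maps change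
  the position along the \<open>s\<close>-axis by a bounded amount when the argument is multiplied by a generator.
  Such a coarse bijection restricted to \<open>{s\<^sup>n}\<close> is coarsely injective, hence eventually moves in one
  direction, and since every position has exactly two preimages, a counting argument forces slope
  \<open>\<plusminus>1\<close>: \<open>c(s\<^sup>n, z)\<close> stays uniformly close to \<open>s\<^sup>n\<close> for all \<open>n\<close>, or to \<open>s\<^sup>-\<^sup>n\<close> for all \<open>n\<close>.
  Minimal actions of \<open>D\<^sub>\<infinity>\<close> on an infinite compact space are topologically free, so by Baire such
  points are dense; as each \<open>c(s\<^sup>n, \<cdot>)\<close> is locally constant, every point inherits the dichotomy on
  each finite window of exponents and hence on all of them. Which alternative holds is read off
  from the single locally constant value \<open>c(s\<^sup>C\<^sup>+\<^sup>1, x)\<close>, so \<open>X\<^sub>+\<close> and \<open>X\<^sub>-\<close> are complementary clopen sets.\<close>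

section \<open>The infinite dihedral group\<close>

text \<open>\<open>level g\<close> is the \<open>n\<close> with \<open>g \<in> {s\<^sup>n, t s\<^sup>n}\<close>; the distance from \<open>g\<close> to \<open>s\<^sup>n\<close> is
  \<open>\<bar>n - level g\<bar>\<close> plus one if \<open>g\<close> is a reflection.\<close>

fun level :: "dinf \<Rightarrow> int" where
  "level (DI m a) = (if a then - m else m)"

fun is_reflection :: "dinf \<Rightarrow> bool" where
  "is_reflection (DI m a) = a"

lemma dmult_dunit_left [simp]: "dmult dunit g = g"
  by (cases g) (simp add: dunit_def)

lemma dmult_dinv_left [simp]: "dmult (dinv g) g = dunit"
  by (cases g) (simp add: dunit_def)

lemma dmult_dinv_right [simp]: "dmult g (dinv g) = dunit"
  by (cases g) (simp add: dunit_def)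

lemma dmult_dinv_eq_dunit_iff: "dmult (dinv h) g = dunit \<longleftrightarrow> g = h"
  by (cases g; cases h) (auto simp: dunit_def)

lemma dmult_idem_iff: "dmult g g = g \<longleftrightarrow> g = dunit"
  by (cases g) (auto simp: dunit_def)

lemma DI_succ_eq_dmult_gen_s: "DI (n + 1) False = dmult gen_s (DI n False)"
  by (simp add: gen_s_def)

lemma DI_reflection_eq_dmult_gen_t: "DI (- n) True = dmult gen_t (DI n False)"
  by (simp add: gen_t_def)

lemma dzpow_gen_s [simp]: "dzpow gen_s n = DI n False"
proof -
  have "(dmult gen_s ^^ k) dunit = DI (int k) False"
    and "(dmult (dinv gen_s) ^^ k) dunit = DI (- int k) False" for k
    by (induction k) (simp_all add: gen_s_def dunit_def)
  then show ?thesis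
    by (simp add: dzpow_def)
qed

lemma word_length_ge:
  assumes "set w \<subseteq> {gen_s, dinv gen_s, gen_t}" and "foldr dmult w dunit = DI m a"
  shows "nat \<bar>m\<bar> + (if a then 1 else 0) \<le> length w"
  using assms
proof (induction w arbitrary: m a)
  case Nil
  then show ?case by (simp add: dunit_def)
next
  case (Cons g w)
  obtain m' a' where w: "foldr dmult w dunit = DI m' a'"
    by (cases "foldr dmult w dunit")
  with Cons have "nat \<bar>m'\<bar> + (if a' then 1 else 0) \<le> length w"
    by simp
  moreover have "g = DI 1 False \<or> g = DI (- 1) False \<or> g = DI 0 True"
    using Cons.prems(1) by (auto simp: gen_s_def gen_t_def)
  ultimately show ?case
    using Cons.prems(2) w by (auto split: if_splits)
qed

lemma word_len_DI: "word_len (DI m a) = nat \<bar>m\<bar> + (if a then 1 else 0)"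
  unfolding word_len_def
proof (rule Least_equality)
  define w where "w = replicate (nat \<bar>m\<bar>) (DI (sgn m) False) @ (if a then [gen_t] else [])"
  have "(dmult (DI e False) ^^ k) (DI j b) = DI (int k * e + j) b" for e j k b
    by (induction k) (simp_all add: algebra_simps)
  then have "foldr dmult w dunit = DI m a"
    by (simp add: w_def gen_t_def dunit_def abs_mult_sgn)
  moreover have "set w \<subseteq> {gen_s, dinv gen_s, gen_t}"
    by (auto simp: w_def gen_s_def gen_t_def sgn_if)
  moreover have "length w = nat \<bar>m\<bar> + (if a then 1 else 0)"
    by (simp add: w_def)
  ultimately show "\<exists>w. length w = nat \<bar>m\<bar> + (if a then 1 else 0)
      \<and> set w \<subseteq> {gen_s, dinv gen_s, gen_t} \<and> foldr dmult w dunit = DI m a"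
    by blast
qed (use word_length_ge in blast)

lemma word_dist_DI_right:
  "word_dist g (DI n False) = nat \<bar>n - level g\<bar> + (if is_reflection g then 1 else 0)"
  by (cases g) (simp add: word_dist_def word_len_DI)

lemma bounded_word_dist_iff:
  "(\<exists>B. \<forall>n. word_dist (f n) (DI (\<sigma> n) False) \<le> B) \<longleftrightarrow> (\<exists>B. \<forall>n. \<bar>level (f n) - \<sigma> n\<bar> \<le> B)"
proof
  assume "\<exists>B. \<forall>n. word_dist (f n) (DI (\<sigma> n) False) \<le> B"
  then obtain B where "\<forall>n. word_dist (f n) (DI (\<sigma> n) False) \<le> B"
    by blast
  then have "nat \<bar>\<sigma> n - level (f n)\<bar> \<le> B" for n
    unfolding word_dist_DI_right by (metis add_leD1)
  then have "\<bar>level (f n) - \<sigma> n\<bar> \<le> int B" for n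
    by (simp add: nat_le_iff abs_minus_commute)
  then show "\<exists>B. \<forall>n. \<bar>level (f n) - \<sigma> n\<bar> \<le> B"
    by blast
next
  assume "\<exists>B. \<forall>n. \<bar>level (f n) - \<sigma> n\<bar> \<le> B"
  then obtain B where "\<forall>n. \<bar>level (f n) - \<sigma> n\<bar> \<le> B"
    by blast
  then have "nat \<bar>\<sigma> n - level (f n)\<bar> \<le> nat B" for n
    by (simp add: nat_mono abs_minus_commute)
  then have "word_dist (f n) (DI (\<sigma> n) False) \<le> nat B + 1" for n
    unfolding word_dist_DI_right by (auto intro: le_SucI)
  then show "\<exists>B. \<forall>n. word_dist (f n) (DI (\<sigma> n) False) \<le> B"
    by blast
qed

lemma level_dmult_le: "\<bar>level (dmult k h) - level h\<bar> \<le> int (word_len k)"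
  by (cases k; cases h) (auto simp: word_len_DI)

section \<open>Coarse geometry of integer sequences\<close>

lemma lipschitz_int_fun:
  fixes p :: "int \<Rightarrow> int"
  assumes "\<forall>n. \<bar>p (n + 1) - p n\<bar> \<le> K"
  shows "\<bar>p m' - p m\<bar> \<le> K * \<bar>m' - m\<bar>"
proof -
  have "\<bar>p (m + int j) - p m\<bar> \<le> K * int j" for m j
  proof (induction j)
    case (Suc j)
    have "\<bar>p (m + int j + 1) - p (m + int j)\<bar> \<le> K"
      using assms by blast
    with Suc show ?case
      by (simp add: algebra_simps)
  qed simp
  from this[of m "nat (m' - m)"] this[of m' "nat (m - m')"] show ?thesis
    by (cases "m \<le> m'") (auto simp: abs_minus_commute)
qed

lemma coarsely_monotone:
  fixes p :: "int \<Rightarrow> int"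
  assumes "K \<ge> 0" and "A > 0"
    and step: "\<forall>n. \<bar>p (n + 1) - p n\<bar> \<le> K" and jump: "\<forall>n. p (n + A) - p n > K"
    and "m \<le> m'"
  shows "p m - K * A \<le> p m'"
proof -
  have "p m - K * A \<le> p (m + int j)" for j
  proof (induction j rule: less_induct)
    case (less j)
    show ?case
    proof (cases "int j < A")
      case True
      then have "K * int j \<le> K * A"
        using \<open>K \<ge> 0\<close> by (simp add: mult_left_mono)
      then show ?thesis
        using lipschitz_int_fun[OF step, of "m + int j" m] by simp
    next
      case False
      define i where "i = j - nat A"
      have "i < j" and j: "m + int j = (m + int i) + A"
        using False \<open>A > 0\<close> by (auto simp: i_def)
      moreover have "p (m + int i) < p (m + int i + A)"
        using jump[rule_format, of "m + int i"] \<open>K \<ge> 0\<close> by linarith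
      ultimately show ?thesis
        using less[of i] unfolding j by linarith
    qed
  qed
  from this[of "nat (m' - m)"] show ?thesis
    using \<open>m \<le> m'\<close> by simp
qed

lemma no_sign_change:
  fixes f :: "int \<Rightarrow> int"
  assumes "\<forall>n. \<bar>f (n + 1) - f n\<bar> \<le> 2 * K" and "\<forall>n. \<bar>f n\<bar> > K"
  shows "f n > K \<longleftrightarrow> f 0 > K"
proof -
  have "f i > K \<longleftrightarrow> f (i + 1) > K" for i
    using assms[rule_format, of i] assms(2)[rule_format, of "i + 1"] by linarith
  then show ?thesis
    by (induction n rule: int_induct[of _ 0]) (simp_all, metis diff_add_cancel)
qed

text \<open>The counting condition satisfied by \<open>p n = level (F s\<^sup>n)\<close> and \<open>q n = level (F (t s\<^sup>n))\<close> for a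
  bijection \<open>F\<close> of \<open>D\<^sub>\<infinity>\<close>: every level set of \<open>level\<close> has exactly two elements.\<close>

definition doubly_covers :: "(int \<Rightarrow> int) \<Rightarrow> (int \<Rightarrow> int) \<Rightarrow> bool" where
  "doubly_covers p q \<longleftrightarrow> (\<forall>a b. finite {n. p n \<in> {a..b}} \<and> finite {n. q n \<in> {a..b}}
     \<and> card {n. p n \<in> {a..b}} + card {n. q n \<in> {a..b}} = 2 * card {a..b})"

lemma doubly_covers_uminus:
  assumes "doubly_covers p q"
  shows "doubly_covers (\<lambda>n. - p n) (\<lambda>n. - q n)"
  unfolding doubly_covers_def
proof (intro allI)
  fix a b :: int
  have "{n. - p n \<in> {a..b}} = {n. p n \<in> {-b..-a}}" and "{n. - q n \<in> {a..b}} = {n. q n \<in> {-b..-a}}"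
    by auto
  moreover have "card {-b..-a} = card {a..b}"
    by simp
  ultimately show "finite {n. - p n \<in> {a..b}} \<and> finite {n. - q n \<in> {a..b}}
      \<and> card {n. - p n \<in> {a..b}} + card {n. - q n \<in> {a..b}} = 2 * card {a..b}"
    using assms unfolding doubly_covers_def by simp
qed

lemma doubly_covers_card_le:
  assumes "doubly_covers p q" and "S \<subseteq> {n. p n \<in> {a..b}}" and "S \<subseteq> {n. q n \<in> {a..b}}"
  shows "card S \<le> card {a..b}"
proof -
  have "card S \<le> card {n. p n \<in> {a..b}}" and "card S \<le> card {n. q n \<in> {a..b}}"
    using assms unfolding doubly_covers_def by (blast intro: card_mono)+
  moreover have "card {n. p n \<in> {a..b}} + card {n. q n \<in> {a..b}} = 2 * card {a..b}"
    using assms(1) unfolding doubly_covers_def by blast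
  ultimately show ?thesis
    by linarith
qed

lemma doubly_covers_card_ge:
  assumes "doubly_covers p q" and "finite S" and "{n. p n \<in> {a..b}} \<subseteq> S" and "{n. q n \<in> {a..b}} \<subseteq> S"
  shows "card {a..b} \<le> card S"
proof -
  have "card {n. p n \<in> {a..b}} \<le> card S" and "card {n. q n \<in> {a..b}} \<le> card S"
    using assms by (blast intro: card_mono)+
  moreover have "card {n. p n \<in> {a..b}} + card {n. q n \<in> {a..b}} = 2 * card {a..b}"
    using assms(1) unfolding doubly_covers_def by blast
  ultimately show ?thesis
    by linarith
qed

text \<open>Coarse monotonicity confines the preimages of an interval to (a neighbourhood of) an interval;
  counting them with \<open>doubly_covers\<close> pins the slope of \<open>p\<close> to \<open>1\<close>.\<close>

lemma quasi_translation_on_interval: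
  fixes p q :: "int \<Rightarrow> int"
  assumes "K \<ge> 0" and "A > 0"
    and step: "\<forall>n. \<bar>p (n + 1) - p n\<bar> \<le> K" and jump: "\<forall>n. p (n + A) - p n > K"
    and close: "\<forall>n. \<bar>q n - p n\<bar> \<le> K" and cover: "doubly_covers p q"
    and "m \<le> m'"
  shows "\<bar>p m' - p m - (m' - m)\<bar> \<le> 2 * K * A + 2 * K + 2"
proof -
  define E where "E = K * A"
  have mono: "k \<le> k' \<Longrightarrow> p k - E \<le> p k'" for k k'
    using coarsely_monotone[OF \<open>K \<ge> 0\<close> \<open>A > 0\<close> step jump] by (simp add: E_def)
  have "p k \<in> {p m - E - K .. p m' + E + K} \<and> q k \<in> {p m - E - K .. p m' + E + K}"
    if "k \<in> {m..m'}" for k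
    using mono[of m k] mono[of k m'] close[rule_format, of k] \<open>K \<ge> 0\<close> that
    by (auto simp: abs_le_iff)
  then have "{m..m'} \<subseteq> {n. p n \<in> {p m - E - K .. p m' + E + K}}"
    and "{m..m'} \<subseteq> {n. q n \<in> {p m - E - K .. p m' + E + K}}"
    by blast+
  then have "card {m..m'} \<le> card {p m - E - K .. p m' + E + K}"
    by (rule doubly_covers_card_le[OF cover])
  then have upper: "m' - m \<le> p m' - p m + 2 * E + 2 * K"
    using \<open>m \<le> m'\<close> by simp
  have "p k \<notin> {p m + E + K + 1 .. p m' - E - K - 1} \<and> q k \<notin> {p m + E + K + 1 .. p m' - E - K - 1}"
    if "k \<notin> {m..m'}" for k
    using mono[of k m] mono[of m' k] close[rule_format, of k] \<open>K \<ge> 0\<close> that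
    by (auto simp: abs_le_iff)
  then have "{n. p n \<in> {p m + E + K + 1 .. p m' - E - K - 1}} \<subseteq> {m..m'}"
    and "{n. q n \<in> {p m + E + K + 1 .. p m' - E - K - 1}} \<subseteq> {m..m'}"
    by blast+
  then have "card {p m + E + K + 1 .. p m' - E - K - 1} \<le> card {m..m'}"
    by (rule doubly_covers_card_ge[OF cover finite_atLeastAtMost_int])
  then have lower: "p m' - p m - 2 * E - 2 * K - 1 \<le> m' - m + 1"
    using \<open>m \<le> m'\<close> by (simp add: nat_le_eq_zle)
  show ?thesis
    using upper lower by (simp add: E_def abs_le_iff)
qed

lemma quasi_translation:
  fixes p q :: "int \<Rightarrow> int"
  assumes "K \<ge> 0" and "A > 0"
    and "\<forall>n. \<bar>p (n + 1) - p n\<bar> \<le> K" and "\<forall>n. p (n + A) - p n > K"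
    and "\<forall>n. \<bar>q n - p n\<bar> \<le> K" and "doubly_covers p q"
  shows "\<bar>p n - p 0 - n\<bar> \<le> 2 * K * A + 2 * K + 2"
  using quasi_translation_on_interval[OF assms, of 0 n] quasi_translation_on_interval[OF assms, of n 0]
  by (cases "0 \<le> n") (simp_all add: abs_minus_commute)

lemma coarse_direction:
  fixes p :: "int \<Rightarrow> int"
  assumes "K \<ge> 0"
    and step: "\<forall>n. \<bar>p (n + 1) - p n\<bar> \<le> K"
    and expand: "\<forall>n m. \<bar>n - m\<bar> \<le> K * (\<bar>p n - p m\<bar> + 2)"
  defines "A \<equiv> K * (K + 2) + 1"
  shows "(\<forall>n. p (n + A) - p n > K) \<or> (\<forall>n. p n - p (n + A) > K)"
proof -
  have "A > 0"
    using \<open>K \<ge> 0\<close> by (simp add: A_def add_pos_nonneg)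
  have jump: "\<bar>p (n + A) - p n\<bar> > K" for n
  proof (rule ccontr)
    assume "\<not> ?thesis"
    then have "K * (\<bar>p (n + A) - p n\<bar> + 2) \<le> K * (K + 2)"
      using \<open>K \<ge> 0\<close> by (simp add: mult_left_mono)
    moreover have "\<bar>(n + A) - n\<bar> \<le> K * (\<bar>p (n + A) - p n\<bar> + 2)"
      using expand by blast
    moreover have "\<bar>(n + A) - n\<bar> = A"
      using \<open>A > 0\<close> by simp
    ultimately show False
      unfolding A_def by linarith
  qed
  have "\<bar>(p (n + 1 + A) - p (n + 1)) - (p (n + A) - p n)\<bar> \<le> 2 * K" for n
    using step[rule_format, of n] step[rule_format, of "n + A"] by (simp add: add.commute add.left_commute)
  then have same_sign: "p (n + A) - p n > K \<longleftrightarrow> p A - p 0 > K" for n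
    using no_sign_change[of "\<lambda>n. p (n + A) - p n" K n] jump by (simp add: add.commute add.left_commute)
  show ?thesis
  proof (cases "p A - p 0 > K")
    case True
    then show ?thesis
      using same_sign by blast
  next
    case False
    have "p n - p (n + A) > K" for n
      using False same_sign[of n] jump[of n] by linarith
    then show ?thesis
      by blast
  qed
qed

definition drift_bound :: "int \<Rightarrow> int" where
  "drift_bound K = 2 * K * (K * (K + 2) + 1) + 2 * K + 2"

lemma quasi_isometry_dichotomy:
  fixes p q :: "int \<Rightarrow> int"
  assumes "K \<ge> 0"
    and step: "\<forall>n. \<bar>p (n + 1) - p n\<bar> \<le> K"
    and expand: "\<forall>n m. \<bar>n - m\<bar> \<le> K * (\<bar>p n - p m\<bar> + 2)"
    and close: "\<forall>n. \<bar>q n - p n\<bar> \<le> K" and cover: "doubly_covers p q"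
  shows "(\<forall>n. \<bar>p n - p 0 - n\<bar> \<le> drift_bound K) \<or> (\<forall>n. \<bar>p n - p 0 + n\<bar> \<le> drift_bound K)"
proof -
  define A where "A = K * (K + 2) + 1"
  have "A > 0"
    using \<open>K \<ge> 0\<close> by (simp add: A_def add_pos_nonneg)
  have bound: "drift_bound K = 2 * K * A + 2 * K + 2"
    by (simp add: drift_bound_def A_def)
  from coarse_direction[OF \<open>K \<ge> 0\<close> step expand, folded A_def] show ?thesis
  proof
    assume "\<forall>n. p (n + A) - p n > K"
    then show ?thesis
      unfolding bound using quasi_translation[OF \<open>K \<ge> 0\<close> \<open>A > 0\<close> step _ close cover] by blast
  next
    assume "\<forall>n. p n - p (n + A) > K"
    then have "\<forall>n. (- p (n + A)) - (- p n) > K"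
      by simp
    moreover have "\<forall>n. \<bar>(- p (n + 1)) - (- p n)\<bar> \<le> K" and "\<forall>n. \<bar>(- q n) - (- p n)\<bar> \<le> K"
      using step close by (simp_all add: abs_minus_commute)
    ultimately have "\<bar>- p n - - p 0 - n\<bar> \<le> 2 * K * A + 2 * K + 2" for n
      using quasi_translation[of K A "\<lambda>n. - p n" "\<lambda>n. - q n", OF \<open>K \<ge> 0\<close> \<open>A > 0\<close> _ _ _
          doubly_covers_uminus[OF cover]]
      by blast
    moreover have "\<bar>- p n - - p 0 - n\<bar> = \<bar>p n - p 0 + n\<bar>" for n
      by linarith
    ultimately show ?thesis
      unfolding bound by simp
  qed
qed

lemma dichotomy_from_windows:
  fixes P Q :: "int \<Rightarrow> bool"
  assumes "\<And>N. (\<forall>n\<in>{-N..N}. P n) \<or> (\<forall>n\<in>{-N..N}. Q n)"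
  shows "(\<forall>n. P n) \<or> (\<forall>n. Q n)"
proof (rule ccontr)
  assume "\<not> ?thesis"
  then obtain n1 n2 where "\<not> P n1" and "\<not> Q n2"
    by blast
  moreover have "n1 \<in> {- max \<bar>n1\<bar> \<bar>n2\<bar> .. max \<bar>n1\<bar> \<bar>n2\<bar>}" and "n2 \<in> {- max \<bar>n1\<bar> \<bar>n2\<bar> .. max \<bar>n1\<bar> \<bar>n2\<bar>}"
    by auto
  ultimately show False
    using assms[of "max \<bar>n1\<bar> \<bar>n2\<bar>"] by blast
qed

lemma linear_dichotomy_bounded_iff:
  fixes f :: "int \<Rightarrow> int"
  assumes dich: "(\<forall>n. \<bar>f n - n\<bar> \<le> C) \<or> (\<forall>n. \<bar>f n + n\<bar> \<le> C)"
  shows "(\<exists>B. \<forall>n. \<bar>f n - n\<bar> \<le> B) \<longleftrightarrow> \<bar>f (C + 1) - (C + 1)\<bar> \<le> C"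
    and "(\<exists>B. \<forall>n. \<bar>f n + n\<bar> \<le> B) \<longleftrightarrow> \<not> \<bar>f (C + 1) - (C + 1)\<bar> \<le> C"
proof -
  have exclusive: False if "\<forall>n. \<bar>f n - n\<bar> \<le> B" and "\<forall>n. \<bar>f n + n\<bar> \<le> B'" for B B'
  proof -
    have "\<bar>f 0\<bar> \<le> B" and "\<bar>f 0\<bar> \<le> B'"
      using that[rule_format, of 0] by simp_all
    moreover have "\<bar>f (B + B' + 1) - (B + B' + 1)\<bar> \<le> B" and "\<bar>f (B + B' + 1) + (B + B' + 1)\<bar> \<le> B'"
      using that by blast+
    ultimately show False
      by linarith
  qed
  have "\<not> (\<bar>f (C + 1) - (C + 1)\<bar> \<le> C \<and> \<bar>f (C + 1) + (C + 1)\<bar> \<le> C)"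
    by linarith
  then have "(\<forall>n. \<bar>f n - n\<bar> \<le> C) \<longleftrightarrow> \<bar>f (C + 1) - (C + 1)\<bar> \<le> C"
    and "(\<forall>n. \<bar>f n + n\<bar> \<le> C) \<longleftrightarrow> \<not> \<bar>f (C + 1) - (C + 1)\<bar> \<le> C"
    using dich by blast+
  then show "(\<exists>B. \<forall>n. \<bar>f n - n\<bar> \<le> B) \<longleftrightarrow> \<bar>f (C + 1) - (C + 1)\<bar> \<le> C"
    and "(\<exists>B. \<forall>n. \<bar>f n + n\<bar> \<le> B) \<longleftrightarrow> \<not> \<bar>f (C + 1) - (C + 1)\<bar> \<le> C"
    using dich exclusive by blast+
qed

section \<open>Coarsely Lipschitz bijections of the dihedral group\<close>

definition level_lipschitz :: "int \<Rightarrow> (dinf \<Rightarrow> dinf) \<Rightarrow> bool" where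
  "level_lipschitz K F \<longleftrightarrow> (\<forall>u. \<bar>level (F (dmult gen_s u)) - level (F u)\<bar> \<le> K
      \<and> \<bar>level (F (dmult gen_t u)) - level (F u)\<bar> \<le> K)"

lemma level_lipschitz_coarse:
  assumes "level_lipschitz K G" and "K \<ge> 0"
  shows "\<bar>level (G h) - level (G h')\<bar> \<le> K * (\<bar>level h - level h'\<bar> + 2)"
proof -
  have "\<forall>n. \<bar>level (G (DI (n + 1) False)) - level (G (DI n False))\<bar> \<le> K"
    using assms(1) unfolding level_lipschitz_def DI_succ_eq_dmult_gen_s by blast
  then have shift_bound: "\<bar>level (G (DI a False)) - level (G (DI a' False))\<bar> \<le> K * \<bar>a - a'\<bar>" for a a'
    by (rule lipschitz_int_fun)
  have near: "\<bar>level (G g) - level (G (DI (level g) False))\<bar> \<le> K" for g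
  proof (cases g)
    case (DI m a)
    show ?thesis
    proof (cases a)
      case True
      then have "g = dmult gen_t (DI (level g) False)"
        using DI by (simp add: gen_t_def)
      then show ?thesis
        using assms(1) unfolding level_lipschitz_def by metis
    qed (use DI \<open>K \<ge> 0\<close> in simp)
  qed
  have "K * (\<bar>level h - level h'\<bar> + 2) = K * \<bar>level h - level h'\<bar> + 2 * K"
    by (simp add: algebra_simps)
  then show ?thesis
    using shift_bound[of "level h" "level h'"] near[of h] near[of h'] by linarith
qed

lemma preimage_split_bij:
  fixes \<phi> :: "dinf \<Rightarrow> int"
  shows "bij_betw (case_sum (\<lambda>n. DI n False) (\<lambda>n. DI (- n) True))
    ({n. \<phi> (DI n False) \<in> S} <+> {n. \<phi> (DI (- n) True) \<in> S}) {u. \<phi> u \<in> S}"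
proof -
  have "u \<in> case_sum (\<lambda>n. DI n False) (\<lambda>n. DI (- n) True)
      ` ({n. \<phi> (DI n False) \<in> S} <+> {n. \<phi> (DI (- n) True) \<in> S})" if "\<phi> u \<in> S" for u
  proof (cases u)
    case (DI m a)
    then show ?thesis
      using that by (cases a) (force intro: image_eqI[of _ _ "Inr (- m)"], force)
  qed
  then show ?thesis
    unfolding bij_betw_def inj_on_def by (auto split: sum.splits)
qed

lemma card_preimage_split:
  fixes \<phi> :: "dinf \<Rightarrow> int"
  shows "finite {u. \<phi> u \<in> S} \<longleftrightarrow> finite {n. \<phi> (DI n False) \<in> S} \<and> finite {n. \<phi> (DI (- n) True) \<in> S}"
    and "finite {u. \<phi> u \<in> S} \<Longrightarrow>
      card {u. \<phi> u \<in> S} = card {n. \<phi> (DI n False) \<in> S} + card {n. \<phi> (DI (- n) True) \<in> S}"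
proof -
  note split = preimage_split_bij[of \<phi> S]
  show "finite {u. \<phi> u \<in> S} \<longleftrightarrow> finite {n. \<phi> (DI n False) \<in> S} \<and> finite {n. \<phi> (DI (- n) True) \<in> S}"
    using bij_betw_finite[OF split] by simp
  then show "finite {u. \<phi> u \<in> S} \<Longrightarrow>
      card {u. \<phi> u \<in> S} = card {n. \<phi> (DI n False) \<in> S} + card {n. \<phi> (DI (- n) True) \<in> S}"
    using bij_betw_same_card[OF split] by (simp add: card_Plus)
qed

lemma card_level_preimage:
  assumes "finite S"
  shows "finite {h. level h \<in> S}" and "card {h. level h \<in> S} = 2 * card S"
  using card_preimage_split[of level S] assms by simp_all

lemma inverse_doubly_covers:
  assumes FG: "\<forall>h. F (G h) = h" and GF: "\<forall>u. G (F u) = u"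
  shows "doubly_covers (\<lambda>n. level (F (DI n False))) (\<lambda>n. level (F (DI (- n) True)))"
  unfolding doubly_covers_def
proof (intro allI)
  fix a b :: int
  have "{u. level (F u) \<in> {a..b}} = G ` {h. level h \<in> {a..b}}"
    using FG GF by (auto intro: image_eqI[of _ G "F _"])
  moreover have "inj G"
    using FG by (metis injI)
  ultimately have "finite {u. level (F u) \<in> {a..b}}" and "card {u. level (F u) \<in> {a..b}} = 2 * card {a..b}"
    using card_level_preimage[of "{a..b}"] by (simp_all add: card_image inj_on_subset)
  then show "finite {n. level (F (DI n False)) \<in> {a..b}} \<and> finite {n. level (F (DI (- n) True)) \<in> {a..b}}
      \<and> card {n. level (F (DI n False)) \<in> {a..b}} + card {n. level (F (DI (- n) True)) \<in> {a..b}}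
        = 2 * card {a..b}"
    using card_preimage_split[of "\<lambda>u. level (F u)" "{a..b}"] by simp
qed

lemma level_dichotomy:
  assumes FG: "\<forall>h. F (G h) = h" and GF: "\<forall>u. G (F u) = u" and "K \<ge> 0"
    and F: "level_lipschitz K F" and G: "level_lipschitz K G" and "F dunit = dunit"
  shows "(\<forall>n. \<bar>level (F (DI n False)) - n\<bar> \<le> drift_bound K)
    \<or> (\<forall>n. \<bar>level (F (DI n False)) + n\<bar> \<le> drift_bound K)"
proof -
  define p where "p n = level (F (DI n False))" for n
  define q where "q n = level (F (DI (- n) True))" for n
  have step: "\<forall>n. \<bar>p (n + 1) - p n\<bar> \<le> K"
    using F unfolding p_def level_lipschitz_def DI_succ_eq_dmult_gen_s by blast
  have close: "\<forall>n. \<bar>q n - p n\<bar> \<le> K"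
    using F unfolding p_def q_def level_lipschitz_def DI_reflection_eq_dmult_gen_t by blast
  have "\<forall>n m. \<bar>n - m\<bar> \<le> K * (\<bar>p n - p m\<bar> + 2)"
    using level_lipschitz_coarse[OF G \<open>K \<ge> 0\<close>] GF unfolding p_def by (metis level.simps)
  moreover have "doubly_covers p q"
    unfolding p_def q_def by (rule inverse_doubly_covers[OF FG GF])
  moreover have "p 0 = 0"
    using \<open>F dunit = dunit\<close> by (simp add: p_def dunit_def)
  ultimately show ?thesis
    using quasi_isometry_dichotomy[OF \<open>K \<ge> 0\<close> step _ close] unfolding p_def by simp
qed

section \<open>Locally constant maps and Baire category\<close>

lemma open_preimage_locally_constant:
  assumes "cont_to_dinf f"
  shows "open {x. P (f x)}"
  using assms unfolding cont_to_dinf_def open_subopen[of "{x. P (f x)}"]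
  by (metis (mono_tags, lifting) mem_Collect_eq subsetI)

lemma locally_constant_finite_range:
  assumes "compact (UNIV :: 'a::topological_space set)" and "cont_to_dinf (f :: 'a \<Rightarrow> dinf)"
  shows "finite (range f)"
proof -
  have "open (f -` {v})" for v
    using open_preimage_locally_constant[OF assms(2), of "\<lambda>w. w = v"] by (simp add: vimage_def)
  then obtain V where "V \<subseteq> range f" and "finite V" and "UNIV \<subseteq> (\<Union>v\<in>V. f -` {v})"
    using compactE_image[OF assms(1), of "range f" "\<lambda>v. f -` {v}"] by blast
  then have "range f \<subseteq> V"
    by auto
  then show ?thesis
    using \<open>finite V\<close> finite_subset by blast
qed

lemma locally_constant_word_len_bounded:
  assumes "compact (UNIV :: 'a::topological_space set)" and "cont_to_dinf (f :: 'a \<Rightarrow> dinf)"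
  obtains K where "\<forall>x. word_len (f x) \<le> K"
  using locally_constant_finite_range[OF assms] by (metis Max_ge finite_imageI image_eqI rangeI)

lemma countable_dinf: "countable (UNIV :: dinf set)"
proof -
  have "UNIV = case_prod DI ` (UNIV :: (int \<times> bool) set)"
    by (metis dinf.exhaust surj_def case_prod_conv)
  then show ?thesis
    by (metis countable_image countableI_type)
qed

lemma compact_Baire:
  fixes \<G> :: "'a::t2_space set set"
  assumes "compact (UNIV :: 'a set)" and "countable \<G>"
    and "\<And>T. T \<in> \<G> \<Longrightarrow> closed T \<and> interior T = {}"
  shows "interior (\<Union>\<G>) = {}"
proof -
  have compact: "compact_space (euclidean :: 'a topology)"
    using assms(1) by (simp add: compact_space_def)
  moreover have "Hausdorff_space (euclidean :: 'a topology)"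
    unfolding Hausdorff_space_def disjnt_def using hausdorff by fastforce
  ultimately have "locally_compact_space (euclidean :: 'a topology) \<and> regular_space (euclidean :: 'a topology)"
    using compact_imp_locally_compact_space compact_Hausdorff_imp_regular_space by blast
  moreover have "closedin euclidean T \<and> euclidean interior_of T = {}" if "T \<in> \<G>" for T
    using assms(3)[OF that] by simp
  ultimately have "euclidean interior_of \<Union>\<G> = {}"
    using Baire_category_alt[of "euclidean :: 'a topology" \<G>] assms(2) by blast
  then show ?thesis
    by simp
qed

lemma interior_vimage_homeomorphism_empty:
  assumes "homeomorphism UNIV UNIV \<phi> \<psi>" and "interior S = {}"
  shows "interior (\<phi> -` S) = {}"
proof -
  have "open (\<phi> ` interior (\<phi> -` S))"
    using homeomorphism_imp_open_map[OF assms(1), of "interior (\<phi> -` S)"] by simp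
  moreover have "\<phi> ` interior (\<phi> -` S) \<subseteq> S"
    using interior_subset by blast
  ultimately have "\<phi> ` interior (\<phi> -` S) \<subseteq> interior S"
    by (simp add: interior_maximal)
  then show ?thesis
    using assms(2) by simp
qed

section \<open>Minimal actions are topologically free\<close>

definition free_point :: "(dinf \<Rightarrow> 'a \<Rightarrow> 'a) \<Rightarrow> 'a \<Rightarrow> bool" where
  "free_point \<alpha> z \<longleftrightarrow> (\<forall>g. \<alpha> g z = z \<longrightarrow> g = dunit)"

locale minimal_cont_action =
  fixes \<alpha> :: "dinf \<Rightarrow> 'a::t2_space \<Rightarrow> 'a"
  assumes compact_univ: "compact (UNIV :: 'a set)"
    and infinite_univ: "infinite (UNIV :: 'a set)"
    and action: "cont_action \<alpha>"
    and minimal: "minimal_action \<alpha>"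
begin

lemma act_dmult: "\<alpha> (dmult g h) x = \<alpha> g (\<alpha> h x)"
proof -
  have "\<alpha> (dmult g h) = \<alpha> g \<circ> \<alpha> h"
    using action unfolding cont_action_def by blast
  then show ?thesis
    by simp
qed

lemma act_dunit [simp]: "\<alpha> dunit x = x"
  using action unfolding cont_action_def by simp

lemma act_dinv [simp]: "\<alpha> (dinv g) (\<alpha> g x) = x" "\<alpha> g (\<alpha> (dinv g) x) = x"
  using act_dmult[of "dinv g" g x] act_dmult[of g "dinv g" x] by simp_all

lemma continuous_act: "continuous_on UNIV (\<alpha> g)"
  using action unfolding cont_action_def by blast

lemma closed_fixed_set: "closed {z. \<alpha> g z = z}"
  by (rule closed_Collect_eq[OF continuous_act continuous_on_id])

lemma free_point_orbit_inj:
  assumes "free_point \<alpha> z" and "\<alpha> g z = \<alpha> h z"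
  shows "g = h"
proof -
  have "\<alpha> (dmult (dinv h) g) z = z"
    using assms(2) by (simp add: act_dmult)
  then show ?thesis
    using assms(1) dmult_dinv_eq_dunit_iff unfolding free_point_def by blast
qed

lemma orbit_meets_open:
  assumes "open U" and "U \<noteq> {}"
  obtains g where "\<alpha> g x \<in> U"
  using open_Int_closure_eq_empty[of U "range (\<lambda>g. \<alpha> g x)"] minimal assms
  unfolding minimal_action_def by auto

lemma not_open_singleton: "\<not> open {x :: 'a}"
proof
  assume "open {x}"
  have "open {y}" for y :: 'a
  proof -
    obtain g where "\<alpha> g y \<in> {x}"
      using orbit_meets_open[OF \<open>open {x}\<close>] by blast
    then have "{y} = \<alpha> g -` {x}"
      by (auto, metis act_dinv(1))
    then show ?thesis
      using continuous_on_open_vimage[of UNIV "\<alpha> g"] continuous_act \<open>open {x}\<close> by auto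
  qed
  moreover obtain z :: 'a where "z islimpt UNIV"
    using Heine_Borel_imp_Bolzano_Weierstrass[OF compact_univ infinite_univ] by blast
  ultimately show False
    unfolding islimpt_def by blast
qed

lemma moves_within_open:
  assumes "open U" and "x \<in> U"
  obtains g where "\<alpha> g x \<in> U" and "\<alpha> g x \<noteq> x"
proof -
  have "U \<noteq> {x}"
    using not_open_singleton assms(1) by blast
  then have "U - {x} \<noteq> {}" and "open (U - {x})"
    using assms by (auto simp: open_Diff)
  then show ?thesis
    using orbit_meets_open that by blast
qed

lemma fixed_translation_power:
  assumes "\<forall>y. \<alpha> (DI n False) y = y"
  shows "\<alpha> (DI (n * k) False) y = y"
proof (induction k rule: int_induct[of _ 0])
  case base
  then show ?case
    by (simp flip: dunit_def)
next
  case (step1 i)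
  have "DI (n * (i + 1)) False = dmult (DI n False) (DI (n * i) False)"
    by (simp add: algebra_simps)
  then show ?case
    using step1 assms by (simp only: act_dmult)
next
  case (step2 i)
  have "DI (n * (i - 1)) False = dmult (dinv (DI n False)) (DI (n * i) False)"
    by (simp add: algebra_simps)
  then show ?case
    using step2 act_dinv(1)[of "DI n False" y] assms by (simp only: act_dmult)
qed

lemma fixed_translation_invariant:
  assumes "\<alpha> (DI n False) y = y"
  shows "\<alpha> (DI n False) (\<alpha> g y) = \<alpha> g y"
proof -
  have "\<alpha> (DI (- n) False) y = y"
    using act_dinv(1)[of "DI n False" y] assms by simp
  then have fixed: "\<alpha> (DI (if is_reflection g then - n else n) False) y = y"
    using assms by simp
  have "\<alpha> (DI n False) (\<alpha> g y) = \<alpha> (dmult (DI n False) g) y"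
    by (simp only: act_dmult)
  also have "dmult (DI n False) g = dmult g (DI (if is_reflection g then - n else n) False)"
    by (cases g) simp
  finally show ?thesis
    using fixed by (simp only: act_dmult)
qed

text \<open>The fixed set of a translation is closed and, translations being normal, invariant; by
  minimality it is everything, and then every orbit is finite.\<close>

lemma translation_fixpoint_free:
  assumes "\<alpha> (DI n False) z = z"
  shows "n = 0"
proof (rule ccontr)
  assume "n \<noteq> 0"
  have "range (\<lambda>g. \<alpha> g z) \<subseteq> {y. \<alpha> (DI n False) y = y}"
    using fixed_translation_invariant[OF assms] by auto
  then have "closure (range (\<lambda>g. \<alpha> g z)) \<subseteq> {y. \<alpha> (DI n False) y = y}"
    by (simp add: closure_minimal closed_fixed_set)
  then have periodic: "\<forall>y. \<alpha> (DI n False) y = y"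
    using minimal unfolding minimal_action_def by blast
  have "range (\<lambda>g. \<alpha> g z) \<subseteq> (\<lambda>(m, e). \<alpha> (DI m e) z) ` ({-\<bar>n\<bar>..\<bar>n\<bar>} \<times> UNIV)"
  proof
    fix w
    assume "w \<in> range (\<lambda>g. \<alpha> g z)"
    then obtain m e where w: "w = \<alpha> (DI m e) z"
      by (metis dinf.exhaust rangeE)
    have "w = \<alpha> (dmult (DI (n * (m div n)) False) (DI (m mod n) e)) z"
      using w by simp
    then have "w = \<alpha> (DI (m mod n) e) z"
      using fixed_translation_power[OF periodic] by (simp only: act_dmult)
    moreover have "m mod n \<in> {-\<bar>n\<bar>..\<bar>n\<bar>}"
      using abs_mod_less[OF \<open>n \<noteq> 0\<close>, of m] by auto
    ultimately show "w \<in> (\<lambda>(m, e). \<alpha> (DI m e) z) ` ({-\<bar>n\<bar>..\<bar>n\<bar>} \<times> UNIV)"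
      by force
  qed
  then have "finite (range (\<lambda>g. \<alpha> g z))"
    by (rule finite_subset) simp
  moreover have "closure (range (\<lambda>g. \<alpha> g z)) = UNIV"
    using minimal unfolding minimal_action_def by blast
  ultimately show False
    using infinite_univ finite_imp_closed closure_closed by metis
qed

text \<open>If a reflection \<open>r\<close> fixes both \<open>x\<close> and a nearby \<open>g x \<noteq> x\<close>, the translation \<open>r (g\<^sup>-\<^sup>1 r g)\<^sup>-\<^sup>1\<close>
  fixes \<open>x\<close>, which forces \<open>g \<in> {1, r}\<close>.\<close>

lemma reflection_fixed_set_interior:
  assumes "open U" and U: "U \<subseteq> {z. \<alpha> (DI a True) z = z}"
  shows "U = {}"
proof (rule ccontr)
  let ?r = "DI a True"
  assume "U \<noteq> {}"
  then obtain x where "x \<in> U"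
    by blast
  then obtain g where "\<alpha> g x \<in> U" and moved: "\<alpha> g x \<noteq> x"
    using moves_within_open[OF \<open>open U\<close>] by blast
  then have "\<alpha> ?r x = x" and "\<alpha> ?r (\<alpha> g x) = \<alpha> g x"
    using \<open>x \<in> U\<close> U by auto
  then have "\<alpha> (dmult (dinv g) (dmult ?r g)) x = x"
    by (simp add: act_dmult)
  then have "\<alpha> (dinv (dmult (dinv g) (dmult ?r g))) x = x"
    using act_dinv(1)[of "dmult (dinv g) (dmult ?r g)" x] by simp
  then have "\<alpha> (dmult ?r (dinv (dmult (dinv g) (dmult ?r g)))) x = x"
    using \<open>\<alpha> ?r x = x\<close> by (simp only: act_dmult)
  moreover obtain m e where g: "g = DI m e"
    by (cases g)
  ultimately have "\<alpha> (DI (if e then 2 * a - 2 * m else 2 * m) False) x = x"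
    by (cases e) simp_all
  then have "(if e then 2 * a - 2 * m else 2 * m) = 0"
    by (rule translation_fixpoint_free)
  then have "g = (if e then ?r else dunit)"
    using g by (cases e) (simp_all add: dunit_def)
  then show False
    using moved \<open>\<alpha> ?r x = x\<close> by (cases e) simp_all
qed

lemma fixed_set_interior_empty:
  assumes "g \<noteq> dunit"
  shows "interior {z. \<alpha> g z = z} = {}"
proof (cases g)
  case (DI m e)
  show ?thesis
  proof (cases e)
    case False
    then have "m \<noteq> 0"
      using DI assms by (simp add: dunit_def)
    then have "\<alpha> g z \<noteq> z" for z
      using translation_fixpoint_free[of m z] DI False by auto
    then show ?thesis
      by simp
  next
    case True
    then have "interior {z. \<alpha> g z = z} \<subseteq> {z. \<alpha> (DI m True) z = z}"
      using DI interior_subset[of "{z. \<alpha> g z = z}"] by simp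
    then show ?thesis
      by (rule reflection_fixed_set_interior[OF open_interior])
  qed
qed

end

section \<open>Continuous orbit equivalence\<close>

locale cont_orbit_equiv = A: minimal_cont_action \<alpha> + B: minimal_cont_action \<beta>
  for \<alpha> \<beta> :: "dinf \<Rightarrow> 'a::t2_space \<Rightarrow> 'a" +
  fixes \<phi> \<psi> :: "'a \<Rightarrow> 'a" and c b :: "dinf \<Rightarrow> 'a \<Rightarrow> dinf"
  assumes homeo: "homeomorphism UNIV UNIV \<phi> \<psi>"
    and c_cont: "\<forall>g. cont_to_dinf (c g)" and b_cont: "\<forall>h. cont_to_dinf (b h)"
    and c_eq: "\<forall>g x. \<phi> (\<alpha> g x) = \<beta> (c g x) (\<phi> x)"
    and b_eq: "\<forall>h y. \<psi> (\<beta> h y) = \<alpha> (b h y) (\<psi> y)"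
    and c_cocycle: "\<forall>g1 g2 x. c (dmult g1 g2) x = dmult (c g1 (\<alpha> g2 x)) (c g2 x)"
begin

lemma psi_phi [simp]: "\<psi> (\<phi> x) = x"
  using homeomorphism_apply1[OF homeo] by simp

lemma phi_psi [simp]: "\<phi> (\<psi> y) = y"
  using homeomorphism_apply2[OF homeo] by simp

lemma c_dunit: "c dunit x = dunit"
proof -
  have "dmult (c dunit x) (c dunit x) = c dunit x"
    using c_cocycle[rule_format, of dunit dunit x] by simp
  then show ?thesis
    by (simp only: dmult_idem_iff)
qed

lemma psi_beta_phi: "\<psi> (\<beta> h (\<phi> z)) = \<alpha> (b h (\<phi> z)) z"
  using b_eq[rule_format, of h "\<phi> z"] by simp

lemma cocycle_inverse:
  assumes "free_point \<alpha> z" and "free_point \<beta> (\<phi> z)"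
  shows "b (c u z) (\<phi> z) = u" and "c (b h (\<phi> z)) z = h"
proof -
  have "\<alpha> (b (c u z) (\<phi> z)) z = \<psi> (\<phi> (\<alpha> u z))"
    by (simp add: c_eq psi_beta_phi)
  then show "b (c u z) (\<phi> z) = u"
    using A.free_point_orbit_inj[OF assms(1)] by simp
  have "\<beta> (c (b h (\<phi> z)) z) (\<phi> z) = \<phi> (\<psi> (\<beta> h (\<phi> z)))"
    by (simp add: c_eq psi_beta_phi)
  then show "c (b h (\<phi> z)) z = h"
    using B.free_point_orbit_inj[OF assms(2)] by simp
qed

lemma b_cocycle_at_free_point:
  assumes "free_point \<alpha> z"
  shows "b (dmult g h) (\<phi> z) = dmult (b g (\<beta> h (\<phi> z))) (b h (\<phi> z))"
proof -
  have "\<alpha> (b (dmult g h) (\<phi> z)) z = \<psi> (\<beta> g (\<beta> h (\<phi> z)))"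
    by (simp only: B.act_dmult flip: psi_beta_phi)
  also have "\<dots> = \<alpha> (b g (\<beta> h (\<phi> z))) (\<psi> (\<beta> h (\<phi> z)))"
    using b_eq by blast
  also have "\<dots> = \<alpha> (dmult (b g (\<beta> h (\<phi> z))) (b h (\<phi> z))) z"
    by (simp only: A.act_dmult psi_beta_phi)
  finally show ?thesis
    by (rule A.free_point_orbit_inj[OF assms])
qed

lemma free_point_dichotomy:
  assumes "free_point \<alpha> z" and "free_point \<beta> (\<phi> z)"
    and bound: "\<forall>x. \<forall>g\<in>{gen_s, gen_t}. word_len (c g x) \<le> K \<and> word_len (b g x) \<le> K"
  shows "(\<forall>n. \<bar>level (c (DI n False) z) - n\<bar> \<le> drift_bound (int K))
    \<or> (\<forall>n. \<bar>level (c (DI n False) z) + n\<bar> \<le> drift_bound (int K))"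
proof (rule level_dichotomy[of "\<lambda>u. c u z" "\<lambda>h. b h (\<phi> z)"])
  show "\<forall>h. c (b h (\<phi> z)) z = h" and "\<forall>u. b (c u z) (\<phi> z) = u"
    using cocycle_inverse[OF assms(1,2)] by simp_all
  have "\<bar>level (c (dmult g u) z) - level (c u z)\<bar> \<le> int K" if "g \<in> {gen_s, gen_t}" for g u
    using level_dmult_le[of "c g (\<alpha> u z)" "c u z"] bound[rule_format, OF that, of "\<alpha> u z"]
      c_cocycle[rule_format, of g u z] by simp
  then show "level_lipschitz (int K) (\<lambda>u. c u z)"
    unfolding level_lipschitz_def by blast
  have "\<bar>level (b (dmult g h) (\<phi> z)) - level (b h (\<phi> z))\<bar> \<le> int K" if "g \<in> {gen_s, gen_t}" for g h
    using level_dmult_le[of "b g (\<beta> h (\<phi> z))" "b h (\<phi> z)"] bound[rule_format, OF that, of "\<beta> h (\<phi> z)"]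
      b_cocycle_at_free_point[OF assms(1), of g h] by simp
  then show "level_lipschitz (int K) (\<lambda>h. b h (\<phi> z))"
    unfolding level_lipschitz_def by blast
qed (simp_all add: c_dunit)

lemma interior_non_free_points_empty:
  "interior (\<Union>((\<lambda>g. {z. \<alpha> g z = z}) ` (- {dunit}) \<union> (\<lambda>g. \<phi> -` {y. \<beta> g y = y}) ` (- {dunit}))) = {}"
proof (rule compact_Baire[OF A.compact_univ])
  have "countable (- {dunit})"
    by (rule countable_subset[OF subset_UNIV countable_dinf])
  then show "countable ((\<lambda>g. {z. \<alpha> g z = z}) ` (- {dunit}) \<union> (\<lambda>g. \<phi> -` {y. \<beta> g y = y}) ` (- {dunit}))"
    by (intro countable_Un countable_image)
next
  fix T
  assume "T \<in> (\<lambda>g. {z. \<alpha> g z = z}) ` (- {dunit}) \<union> (\<lambda>g. \<phi> -` {y. \<beta> g y = y}) ` (- {dunit})"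
  then consider g where "g \<noteq> dunit" and "T = {z. \<alpha> g z = z}"
    | g where "g \<noteq> dunit" and "T = \<phi> -` {y. \<beta> g y = y}"
    by blast
  then show "closed T \<and> interior T = {}"
  proof cases
    case 1
    then show ?thesis
      using A.closed_fixed_set A.fixed_set_interior_empty[OF 1(1)] by blast
  next
    case 2
    have "closed (\<phi> -` {y. \<beta> g y = y})"
      by (rule closed_vimage[OF B.closed_fixed_set homeomorphism_cont1[OF homeo]])
    moreover have "interior (\<phi> -` {y. \<beta> g y = y}) = {}"
      by (rule interior_vimage_homeomorphism_empty[OF homeo B.fixed_set_interior_empty[OF 2(1)]])
    ultimately show ?thesis
      using 2(2) by blast
  qed
qed

lemma free_points_dense:
  assumes "open V" and "V \<noteq> {}"
  obtains z where "z \<in> V" and "free_point \<alpha> z" and "free_point \<beta> (\<phi> z)"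
proof -
  have "\<not> V \<subseteq> \<Union>((\<lambda>g. {z. \<alpha> g z = z}) ` (- {dunit}) \<union> (\<lambda>g. \<phi> -` {y. \<beta> g y = y}) ` (- {dunit}))"
    using interior_non_free_points_empty interior_maximal assms by blast
  then obtain z where "z \<in> V"
    and z: "z \<notin> \<Union>((\<lambda>g. {z. \<alpha> g z = z}) ` (- {dunit}) \<union> (\<lambda>g. \<phi> -` {y. \<beta> g y = y}) ` (- {dunit}))"
    by blast
  then have "free_point \<alpha> z" and "free_point \<beta> (\<phi> z)"
    unfolding free_point_def by blast+
  then show ?thesis
    using that \<open>z \<in> V\<close> by blast
qed

lemma generator_cocycles_bounded:
  obtains K where "\<forall>x. \<forall>g\<in>{gen_s, gen_t}. word_len (c g x) \<le> K \<and> word_len (b g x) \<le> K"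
proof -
  have "\<exists>K. \<forall>x. word_len (f x) \<le> K" if f: "cont_to_dinf f" for f :: "'a \<Rightarrow> dinf"
  proof -
    obtain K where "\<forall>x. word_len (f x) \<le> K"
      by (rule locally_constant_word_len_bounded[OF A.compact_univ f])
    then show ?thesis
      by blast
  qed
  then obtain K1 K2 K3 K4 where K: "\<forall>x. word_len (c gen_s x) \<le> K1" "\<forall>x. word_len (c gen_t x) \<le> K2"
    "\<forall>x. word_len (b gen_s x) \<le> K3" "\<forall>x. word_len (b gen_t x) \<le> K4"
    using c_cont b_cont by (metis (no_types))
  have "word_len (c g x) \<le> K1 + K2 + K3 + K4 \<and> word_len (b g x) \<le> K1 + K2 + K3 + K4"
    if "g \<in> {gen_s, gen_t}" for x g
    using that K[THEN spec, of x] by auto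
  then show ?thesis
    using that by blast
qed

lemma uniform_linear_dichotomy:
  obtains C where "\<forall>x. (\<forall>n. \<bar>level (c (DI n False) x) - n\<bar> \<le> C) \<or> (\<forall>n. \<bar>level (c (DI n False) x) + n\<bar> \<le> C)"
proof -
  obtain K where bound: "\<forall>x. \<forall>g\<in>{gen_s, gen_t}. word_len (c g x) \<le> K \<and> word_len (b g x) \<le> K"
    by (rule generator_cocycles_bounded)
  define C where "C = drift_bound (int K)"
  have window: "(\<forall>n\<in>{-N..N}. \<bar>level (c (DI n False) x) - n\<bar> \<le> C)
      \<or> (\<forall>n\<in>{-N..N}. \<bar>level (c (DI n False) x) + n\<bar> \<le> C)" for x N
  proof -
    define V where "V = (\<Inter>n\<in>{-N..N}. {y. c (DI n False) y = c (DI n False) x})"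
    have "open {y. c (DI n False) y = c (DI n False) x}" for n
      using open_preimage_locally_constant[of "c (DI n False)" "\<lambda>v. v = c (DI n False) x"] c_cont
      by simp
    then have "open V"
      unfolding V_def by (intro open_INT) auto
    moreover have "x \<in> V"
      by (simp add: V_def)
    ultimately obtain z where "z \<in> V" and "free_point \<alpha> z" and "free_point \<beta> (\<phi> z)"
      using free_points_dense by blast
    have "(\<forall>n. \<bar>level (c (DI n False) z) - n\<bar> \<le> C) \<or> (\<forall>n. \<bar>level (c (DI n False) z) + n\<bar> \<le> C)"
      unfolding C_def by (rule free_point_dichotomy[OF \<open>free_point \<alpha> z\<close> \<open>free_point \<beta> (\<phi> z)\<close> bound])
    moreover have agree: "\<forall>n\<in>{-N..N}. c (DI n False) x = c (DI n False) z"
      using \<open>z \<in> V\<close> unfolding V_def by simp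
    ultimately show ?thesis
      by (elim disjE) (simp_all add: agree)
  qed
  have "(\<forall>n. \<bar>level (c (DI n False) x) - n\<bar> \<le> C) \<or> (\<forall>n. \<bar>level (c (DI n False) x) + n\<bar> \<le> C)" for x
    by (rule dichotomy_from_windows) (rule window)
  then show ?thesis
    using that by blast
qed

end

theorem mainTheorem9:
  fixes \<alpha> \<beta> :: "dinf \<Rightarrow> 'a::t2_space \<Rightarrow> 'a"
    and \<phi> \<psi> :: "'a \<Rightarrow> 'a"
    and c b :: "dinf \<Rightarrow> 'a \<Rightarrow> dinf"
  assumes cpt: "compact (UNIV :: 'a set)"
    and inf: "infinite (UNIV :: 'a set)"
    and act_a: "cont_action \<alpha>" and act_b: "cont_action \<beta>"
    and min_a: "minimal_action \<alpha>" and min_b: "minimal_action \<beta>"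
    and homeo: "homeomorphism UNIV UNIV \<phi> \<psi>"
    and c_cont: "\<forall>g. cont_to_dinf (c g)"
    and b_cont: "\<forall>h. cont_to_dinf (b h)"
    and c_eq: "\<forall>g x. \<phi> (\<alpha> g x) = \<beta> (c g x) (\<phi> x)"
    and b_eq: "\<forall>h y. \<psi> (\<beta> h y) = \<alpha> (b h y) (\<psi> y)"
    and c_cocycle: "\<forall>g1 g2 x. c (dmult g1 g2) x = dmult (c g1 (\<alpha> g2 x)) (c g2 x)"
  defines "Xp \<equiv> {x. \<exists>B. \<forall>n::int. word_dist (c (dzpow gen_s n) x) (dzpow gen_s n) \<le> B}"
    and "Xm \<equiv> {x. \<exists>B. \<forall>n::int. word_dist (c (dzpow gen_s n) x) (dzpow gen_s (- n)) \<le> B}"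
  shows "Xp \<union> Xm = UNIV \<and> Xp \<inter> Xm = {} \<and> open Xp \<and> closed Xp \<and> open Xm \<and> closed Xm"
proof -
  interpret cont_orbit_equiv \<alpha> \<beta> \<phi> \<psi> c b
    by unfold_locales fact+
  obtain C where dich: "\<forall>x. (\<forall>n. \<bar>level (c (DI n False) x) - n\<bar> \<le> C) \<or> (\<forall>n. \<bar>level (c (DI n False) x) + n\<bar> \<le> C)"
    by (rule uniform_linear_dichotomy)
  define W where "W = {x. \<bar>level (c (DI (C + 1) False) x) - (C + 1)\<bar> \<le> C}"
  have "x \<in> Xp \<longleftrightarrow> (\<exists>B. \<forall>n. \<bar>level (c (DI n False) x) - n\<bar> \<le> B)"
    and "x \<in> Xm \<longleftrightarrow> (\<exists>B. \<forall>n. \<bar>level (c (DI n False) x) + n\<bar> \<le> B)" for x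
    using bounded_word_dist_iff[of "\<lambda>n. c (DI n False) x" "\<lambda>n. n"]
      bounded_word_dist_iff[of "\<lambda>n. c (DI n False) x" "\<lambda>n. - n"]
    unfolding Xp_def Xm_def by simp_all
  then have "Xp = W" and "Xm = - W"
    using linear_dichotomy_bounded_iff[OF dich[rule_format]] unfolding W_def by auto
  moreover have "open W" and "open (- W)"
    using open_preimage_locally_constant[of "c (DI (C + 1) False)" "\<lambda>v. \<bar>level v - (C + 1)\<bar> \<le> C"]
      open_preimage_locally_constant[of "c (DI (C + 1) False)" "\<lambda>v. \<not> \<bar>level v - (C + 1)\<bar> \<le> C"]
      c_cont
    unfolding W_def Compl_eq by simp_all
  ultimately show ?thesis
    by (auto simp: closed_def)
qed

end
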